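(* Let $M\in\mathbb{R}^{n\times n}$ be symmetric positive definite, let $\delta_i,\delta_{i-1}>0$, let $\theta_{i-1},\theta_{i-2}\in\mathbb{R}^n$ and a control value $u$ be fixed, and let $\bar P(\cdot,u):\mathbb{R}^n\to\mathbb{R}$ be $L$-curvature bounded for some $L>0$. Define $$\bar E_i(\theta_i)=\frac{1}{2\delta_i^2}\Big\|\theta_i-\big(1+\tfrac{\delta_i}{\delta_{i-1}}\big)\theta_{i-1}+\tfrac{\delta_i}{\delta_{i-1}}\theta_{i-2}\Big\|_M^2+\bar P(\theta_i,u).$$ If $\delta_i<\sqrt{\sigma_{\min}(M)/L}$, then $\bar E_i$ is strongly convex in $\theta_i$ and its minimizer over $\theta_i\in\mathbb{R}^n$ is unique.
   Context: $\|x\|_M^2=x^TMx$; $\sigma_{\min}(M)$ denotes the smallest singular value of $M$. A function $\phi:\mathbb{R}^n\to\mathbb{R}$ is $L$-weakly convex if $\phi(x)+\frac{L}{2}\|x\|^2$ is convex; it is $L$-gradient continuous if it is differentiable and $\|\nabla\phi(x)-\nabla\phi(x')\|\le L\|x-x'\|$ for all $x,x'$; it is $L$-curvature bounded if both properties hold. *)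

theory Defs
  imports "HOL-Analysis.Analysis"
begin

definition Mnorm_sq :: "real^'n^'n \<Rightarrow> real^'n \<Rightarrow> real" where
  "Mnorm_sq M x = x \<bullet> (M *v x)"

definition sym_pos_def :: "real^'n^'n \<Rightarrow> bool" where
  "sym_pos_def M \<longleftrightarrow> transpose M = M \<and> (\<forall>x. x \<noteq> 0 \<longrightarrow> x \<bullet> (M *v x) > 0)"

definition sigma_min :: "real^'n^'n \<Rightarrow> real" where
  "sigma_min M = sqrt (Inf {lam. \<exists>v. v \<noteq> 0 \<and> (transpose M ** M) *v v = lam *s v})"

definition weakly_convex :: "real \<Rightarrow> (real^'n \<Rightarrow> real) \<Rightarrow> bool" where
  "weakly_convex L \<phi> \<longleftrightarrow> convex_on UNIV (\<lambda>x. \<phi> x + L / 2 * (norm x)\<^sup>2)"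

definition gradient_continuous :: "real \<Rightarrow> (real^'n \<Rightarrow> real) \<Rightarrow> bool" where
  "gradient_continuous L \<phi> \<longleftrightarrow>
     (\<exists>g. (\<forall>x. (\<phi> has_derivative (\<lambda>h. g x \<bullet> h)) (at x)) \<and>
          (\<forall>x x'. norm (g x - g x') \<le> L * norm (x - x')))"

definition curvature_bounded :: "real \<Rightarrow> (real^'n \<Rightarrow> real) \<Rightarrow> bool" where
  "curvature_bounded L \<phi> \<longleftrightarrow> weakly_convex L \<phi> \<and> gradient_continuous L \<phi>"

definition strongly_convex :: "(real^'n \<Rightarrow> real) \<Rightarrow> bool" where
  "strongly_convex f \<longleftrightarrow> (\<exists>\<mu>>0. convex_on UNIV (\<lambda>x. f x - \<mu> / 2 * (norm x)\<^sup>2))"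

end

theory Submission
  imports Defs
begin

(*
  For symmetric positive definite M the minimum l of the Rayleigh quotient is an eigenvalue of M,
  so l^2 is an eigenvalue of M^T M and sigma_min(M) <= l; hence the M-norm term of E dominates
  sigma_min(M) / (2 delta_i^2) |theta|^2. Subtracting mu/2 |theta|^2 with
  mu = sigma_min(M) / delta_i^2 - L > 0 from E leaves a convex quadratic plus the convex function
  Pbar + L/2 |theta|^2, so E is mu-strongly convex. A strongly convex function on R^n exceeds
  mu/2 |theta|^2 minus an affine bound, so its sublevel sets are compact and it attains its minimum;
  the strict midpoint inequality makes the minimizer unique.
*)

lemma inner_matrix_vector_sym:
  fixes M :: "real^'n^'n"
  assumes "transpose M = M"
  shows "x \<bullet> (M *v y) = y \<bullet> (M *v x)"
  by (metis assms dot_lmul_matrix inner_commute transpose_matrix_vector)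

lemma quadratic_nonneg_imp_linear_coeff_zero:
  fixes a b :: real
  assumes "\<And>t. 0 \<le> 2 * t * a + t\<^sup>2 * b"
  shows "a = 0"
proof (rule ccontr)
  assume "a \<noteq> 0"
  define k where "k = \<bar>b\<bar> + 1"
  define t where "t = - a / k"
  have "k > 0"
    by (simp add: k_def add_nonneg_pos)
  have "2 * t * a + t\<^sup>2 * b \<le> 2 * t * a + t\<^sup>2 * (k - 1)"
    by (simp add: k_def mult_left_mono)
  also have "\<dots> = - a\<^sup>2 * (k + 1) / k\<^sup>2"
    using \<open>k > 0\<close> by (simp add: t_def field_simps power2_eq_square)
  also have "\<dots> < 0"
    using \<open>a \<noteq> 0\<close> \<open>k > 0\<close> by (simp add: divide_neg_pos)
  finally show False
    using assms[of t] by simp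
qed

lemma quadratic_form_attains_min_on_sphere:
  fixes M :: "real^'n^'n"
  obtains v where "norm v = 1" and "\<And>y. (v \<bullet> (M *v v)) * (y \<bullet> y) \<le> y \<bullet> (M *v y)"
proof -
  define Q where "Q y = y \<bullet> (M *v y)" for y :: "real^'n"
  have "continuous_on (sphere 0 1) Q"
    unfolding Q_def by (intro continuous_intros matrix_vector_mult_linear_continuous_on)
  moreover have "sphere (0::real^'n) 1 \<noteq> {}"
    by (simp add: sphere_eq_empty)
  ultimately obtain v where v: "v \<in> sphere 0 1" and min: "\<And>z. z \<in> sphere 0 1 \<Longrightarrow> Q v \<le> Q z"
    using continuous_attains_inf[OF compact_sphere] by blast
  have "Q v * (y \<bullet> y) \<le> Q y" for y
  proof (cases "y = 0")
    case False
    have "Q v \<le> Q (y /\<^sub>R norm y)"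
      using False by (intro min) simp
    also have "\<dots> = Q y / (y \<bullet> y)"
      by (simp add: Q_def matrix_vector_mult_scaleR power2_norm_eq_inner[symmetric] power2_eq_square field_simps)
    finally show ?thesis
      using False by (simp add: pos_le_divide_eq)
  qed (simp add: Q_def)
  with v show thesis
    using that by (simp add: Q_def)
qed

lemma quadratic_form_minimizer_is_eigenvector:
  fixes M :: "real^'n^'n"
  assumes sym: "transpose M = M"
    and lower: "\<And>y. l * (y \<bullet> y) \<le> y \<bullet> (M *v y)"
    and attained: "v \<bullet> (M *v v) = l * (v \<bullet> v)"
  shows "M *v v = l *\<^sub>R v"
proof -
  define B where "B y = y \<bullet> (M *v y) - l * (y \<bullet> y)" for y
  define w where "w = M *v v - l *\<^sub>R v"
  have "w \<bullet> (M *v v) - l * (w \<bullet> v) = w \<bullet> w"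
    by (simp add: w_def inner_diff_right)
  moreover have "v \<bullet> (M *v w) = w \<bullet> (M *v v)"
    by (rule inner_matrix_vector_sym[OF sym])
  ultimately have "B (v + t *\<^sub>R w) = 2 * t * (w \<bullet> w) + t\<^sup>2 * B w" for t
    using attained
    by (simp add: B_def matrix_vector_right_distrib matrix_vector_mult_scaleR inner_add_left
        inner_add_right inner_commute[of w v] power2_eq_square algebra_simps)
  moreover have "0 \<le> B y" for y
    using lower[of y] by (simp add: B_def)
  ultimately have "w \<bullet> w = 0"
    by (intro quadratic_nonneg_imp_linear_coeff_zero[where b = "B w"]) metis
  then show ?thesis
    by (simp add: w_def)
qed

lemma transpose_mult_self_eigenvalue_nonneg:
  fixes M :: "real^'n^'n"
  assumes "v \<noteq> 0" and "(transpose M ** M) *v v = l *s v"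
  shows "0 \<le> l"
proof -
  have "l * (v \<bullet> v) = (M *v v) \<bullet> (M *v v)"
    using assms(2)
    by (metis dot_lmul_matrix inner_scaleR_right matrix_vector_mul_assoc scalar_mult_eq_scaleR
        transpose_matrix_vector inner_commute)
  then have "0 \<le> l * (v \<bullet> v)"
    by simp
  moreover have "0 < v \<bullet> v"
    using assms(1) by simp
  ultimately show ?thesis
    by (simp add: zero_le_mult_iff)
qed

lemma sigma_min_le_eigenvalue:
  fixes M :: "real^'n^'n"
  assumes "transpose M = M" and "v \<noteq> 0" and "M *v v = l *\<^sub>R v" and "0 \<le> l"
  shows "sigma_min M \<le> l"
proof -
  let ?spec = "{l. \<exists>v. v \<noteq> 0 \<and> (transpose M ** M) *v v = l *s v}"
  have "(transpose M ** M) *v v = l\<^sup>2 *s v"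
    using assms(1,3) by (simp add: matrix_vector_mul_assoc[symmetric] matrix_vector_mult_scaleR
        scalar_mult_eq_scaleR power2_eq_square)
  with assms(2) have "l\<^sup>2 \<in> ?spec"
    by blast
  moreover have "bdd_below ?spec"
    using transpose_mult_self_eigenvalue_nonneg by (intro bdd_belowI[of _ 0]) blast
  ultimately have "Inf ?spec \<le> l\<^sup>2"
    by (rule cInf_lower)
  then have "sigma_min M \<le> sqrt (l\<^sup>2)"
    unfolding sigma_min_def by (rule real_sqrt_le_mono)
  with assms(4) show ?thesis
    by simp
qed

lemma sigma_min_le_quadratic_form:
  fixes M :: "real^'n^'n"
  assumes "sym_pos_def M"
  shows "sigma_min M * (x \<bullet> x) \<le> x \<bullet> (M *v x)"
proof -
  have sym: "transpose M = M" and pos: "\<And>y. y \<noteq> 0 \<Longrightarrow> 0 < y \<bullet> (M *v y)"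
    using assms by (auto simp: sym_pos_def_def)
  obtain v where v: "norm v = 1" and lower: "\<And>y. (v \<bullet> (M *v v)) * (y \<bullet> y) \<le> y \<bullet> (M *v y)"
    using quadratic_form_attains_min_on_sphere[of M] by blast
  define l where "l = v \<bullet> (M *v v)"
  have "v \<noteq> 0" and "v \<bullet> v = 1"
    using v by (auto simp: norm_eq_1)
  then have "M *v v = l *\<^sub>R v"
    using lower by (intro quadratic_form_minimizer_is_eigenvector[OF sym]) (auto simp: l_def)
  moreover have "0 \<le> l"
    using pos[OF \<open>v \<noteq> 0\<close>] by (simp add: l_def)
  ultimately have "sigma_min M \<le> l"
    using sigma_min_le_eigenvalue[OF sym \<open>v \<noteq> 0\<close>] by blast
  then show ?thesis
    using lower[of x] mult_right_mono[of "sigma_min M" l "x \<bullet> x"] by (simp add: l_def)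
qed

lemma quadratic_form_convex_combination:
  fixes M :: "real^'n^'n" and x y :: "real^'n" and t :: real
  assumes sym: "transpose M = M"
  shows "(1 - t) * (x \<bullet> (M *v x)) + t * (y \<bullet> (M *v y))
       - ((1 - t) *\<^sub>R x + t *\<^sub>R y) \<bullet> (M *v ((1 - t) *\<^sub>R x + t *\<^sub>R y))
       = t * (1 - t) * ((x - y) \<bullet> (M *v (x - y)))"
proof -
  have "y \<bullet> (M *v x) = x \<bullet> (M *v y)" using inner_matrix_vector_sym[OF sym] .
  then show ?thesis
    by (simp add: matrix_vector_right_distrib matrix_vector_mult_diff_distrib matrix_vector_mult_scaleR
        inner_diff_left inner_diff_right inner_add_left inner_add_right algebra_simps)
qed

lemma convex_on_shifted_quadratic_form:
  fixes M :: "real^'n^'n" and c :: "real^'n" and s :: real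
  assumes sym: "transpose M = M" and lower: "\<And>d. s * (d \<bullet> d) \<le> d \<bullet> (M *v d)"
  shows "convex_on UNIV (\<lambda>x. (x - c) \<bullet> (M *v (x - c)) - s * (x \<bullet> x))"
proof (rule convex_onI)
  fix t :: real and x y :: "real^'n"
  assume t: "0 < t" "t < 1"
  \<comment> \<open>Opaque abbreviations keep the final inequality linear in the form values.\<close>
  define Q where "Q v = v \<bullet> (M *v v)" for v
  define N where "N v = v \<bullet> v" for v :: "real^'n"
  let ?z = "(1 - t) *\<^sub>R x + t *\<^sub>R y"
  have "?z - c = (1 - t) *\<^sub>R (x - c) + t *\<^sub>R (y - c)"
    by (simp add: algebra_simps)
  then have Q_comb: "(1 - t) * Q (x - c) + t * Q (y - c) - Q (?z - c) = t * (1 - t) * Q (x - y)"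
    using quadratic_form_convex_combination[OF sym, where x = "x - c" and y = "y - c" and t = t]
    by (simp add: Q_def)
  have "(1 - t) * N x + t * N y - N ?z = t * (1 - t) * N (x - y)"
    using quadratic_form_convex_combination[OF transpose_mat[of 1], where x = x and y = y and t = t]
    by (simp add: N_def matrix_vector_mul_lid)
  then have N_comb: "s * ((1 - t) * N x + t * N y - N ?z) = s * (t * (1 - t) * N (x - y))"
    by (simp only:)
  have "0 \<le> t * (1 - t) * (Q (x - y) - s * N (x - y))"
    using t lower[of "x - y"] by (simp add: Q_def N_def)
  then have "Q (?z - c) - s * N ?z \<le> (1 - t) * (Q (x - c) - s * N x) + t * (Q (y - c) - s * N y)"
    using Q_comb N_comb by (simp add: algebra_simps)
  then show "(?z - c) \<bullet> (M *v (?z - c)) - s * (?z \<bullet> ?z)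
      \<le> (1 - t) * ((x - c) \<bullet> (M *v (x - c)) - s * (x \<bullet> x)) + t * ((y - c) \<bullet> (M *v (y - c)) - s * (y \<bullet> y))"
    by (simp only: Q_def N_def)
qed simp

lemma convex_on_UNIV_lower_bound:
  fixes h :: "'a::euclidean_space \<Rightarrow> real"
  assumes conv: "convex_on UNIV h"
  obtains K where "0 \<le> K" and "\<And>x. - K * (1 + norm x) \<le> h x"
proof -
  have "continuous_on (cball 0 1) h"
    using convex_on_continuous[OF open_UNIV conv] by (rule continuous_on_subset) simp
  then have "bounded (h ` cball 0 1)"
    by (intro compact_imp_bounded compact_continuous_image compact_cball)
  then obtain K where K: "\<And>y. norm y \<le> 1 \<Longrightarrow> \<bar>h y\<bar> \<le> K"
    unfolding bounded_iff by (metis image_eqI mem_cball_0 real_norm_def)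
  have "0 \<le> K"
    using K[of 0] by simp
  have "- 2 * K - 2 * K * norm x \<le> h x" for x
  proof (cases "norm x \<le> 1")
    case True
    have "0 \<le> 2 * K * norm x"
      using \<open>0 \<le> K\<close> by simp
    moreover have "- K \<le> h x"
      using K[OF True] by (simp add: abs_le_iff)
    ultimately show ?thesis
      using \<open>0 \<le> K\<close> by linarith
  next
    case False
    define t where "t = 1 / norm x"
    have "1 < norm x"
      using False by simp
    then have t: "0 \<le> t" "t \<le> 1" and "norm (t *\<^sub>R x) = 1"
      by (auto simp: t_def divide_le_eq_1)
    have "h (t *\<^sub>R x) \<le> (1 - t) * h 0 + t * h x"
      using convex_onD[OF conv t, of 0 x] by simp
    moreover have "(1 - t) * h 0 \<le> K"
    proof -
      have "(1 - t) * h 0 \<le> (1 - t) * K"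
        using K[of 0] t by (intro mult_left_mono) (auto simp: abs_le_iff)
      also have "\<dots> \<le> K"
        using t \<open>0 \<le> K\<close> by (simp add: algebra_simps)
      finally show ?thesis .
    qed
    moreover have "- K \<le> h (t *\<^sub>R x)"
      using K[of "t *\<^sub>R x"] \<open>norm (t *\<^sub>R x) = 1\<close> by (simp add: abs_le_iff)
    ultimately have "- 2 * K \<le> t * h x"
      by linarith
    then have "- 2 * K * norm x \<le> t * h x * norm x"
      using \<open>1 < norm x\<close> by (intro mult_right_mono) simp_all
    also have "t * h x * norm x = h x"
      using \<open>1 < norm x\<close> by (auto simp: t_def)
    finally have "- 2 * K * norm x \<le> h x" .
    then show ?thesis
      using \<open>0 \<le> K\<close> by (simp add: algebra_simps)
  qed
  with \<open>0 \<le> K\<close> show thesis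
    by (intro that[of "2 * K"]) (auto simp: algebra_simps)
qed

lemma continuous_attains_min_of_bounded_sublevel:
  fixes f :: "'a::heine_borel \<Rightarrow> real"
  assumes "continuous_on UNIV f" and "bounded {y. f y \<le> f x0}"
  obtains x where "\<And>y. f x \<le> f y"
proof -
  let ?S = "{y. f y \<le> f x0}"
  have "compact ?S"
    using assms by (simp add: compact_eq_bounded_closed closed_Collect_le)
  moreover have "?S \<noteq> {}"
    by auto
  ultimately obtain x where "x \<in> ?S" and "\<And>y. y \<in> ?S \<Longrightarrow> f x \<le> f y"
    using continuous_attains_inf continuous_on_subset[OF assms(1)] by (metis subset_UNIV)
  then show thesis
    using that by (metis linorder_le_cases mem_Collect_eq order_trans)
qed

lemma strongly_convex_attains_min:
  fixes f :: "real^'n \<Rightarrow> real"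
  assumes "strongly_convex f"
  obtains x where "\<And>y. f x \<le> f y"
proof -
  obtain \<mu> where "0 < \<mu>" and conv: "convex_on UNIV (\<lambda>x. f x - \<mu> / 2 * (norm x)\<^sup>2)"
    using assms by (auto simp: strongly_convex_def)
  obtain K where "0 \<le> K" and K: "\<And>x. - K * (1 + norm x) \<le> f x - \<mu> / 2 * (norm x)\<^sup>2"
    using convex_on_UNIV_lower_bound[OF conv] by blast
  have "continuous_on UNIV (\<lambda>x. (f x - \<mu> / 2 * (norm x)\<^sup>2) + \<mu> / 2 * (norm x)\<^sup>2)"
    by (intro continuous_intros convex_on_continuous[OF open_UNIV conv])
  then have cont: "continuous_on UNIV f"
    by simp
  have "norm y \<le> max 1 (2 * (\<bar>f 0\<bar> + 2 * K) / \<mu>)" if "f y \<le> f 0" for y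
  proof (cases "norm y \<le> 1")
    case False
    define r where "r = norm y"
    have "\<mu> / 2 * r * r \<le> f 0 + K * (1 + r)"
      using K[of y] that by (simp add: r_def power2_eq_square)
    also have "\<dots> \<le> (\<bar>f 0\<bar> + 2 * K) * r"
    proof -
      have "\<bar>f 0\<bar> \<le> \<bar>f 0\<bar> * r" and "K \<le> K * r"
        using False \<open>0 \<le> K\<close> by (simp_all add: r_def mult_le_cancel_left1)
      then show ?thesis
        by (simp add: algebra_simps)
    qed
    finally have "\<mu> / 2 * r \<le> \<bar>f 0\<bar> + 2 * K"
      by (rule mult_right_le_imp_le) (use False in \<open>auto simp: r_def\<close>)
    then have "r \<le> 2 * (\<bar>f 0\<bar> + 2 * K) / \<mu>"
      using \<open>0 < \<mu>\<close> by (simp add: field_simps)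
    then show ?thesis
      by (simp add: r_def)
  qed simp
  then have "bounded {y. f y \<le> f 0}"
    by (auto simp: bounded_iff)
  with cont show thesis
    using continuous_attains_min_of_bounded_sublevel that by blast
qed

lemma strongly_convex_midpoint_le:
  fixes f :: "real^'n \<Rightarrow> real"
  assumes conv: "convex_on UNIV (\<lambda>x. f x - \<mu> / 2 * (norm x)\<^sup>2)"
  shows "f (midpoint x y) \<le> (f x + f y) / 2 - \<mu> / 8 * (norm (x - y))\<^sup>2"
proof -
  have "midpoint x y = (1 - 1 / 2) *\<^sub>R x + (1 / 2) *\<^sub>R y"
    by (simp add: midpoint_def scaleR_add_right)
  then have "f (midpoint x y) - \<mu> / 2 * (norm (midpoint x y))\<^sup>2
      \<le> (f x - \<mu> / 2 * (norm x)\<^sup>2) / 2 + (f y - \<mu> / 2 * (norm y)\<^sup>2) / 2"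
    using convex_onD[OF conv, of "1 / 2" x y] by simp
  moreover have "(norm (midpoint x y))\<^sup>2 = ((norm x)\<^sup>2 + (norm y)\<^sup>2) / 2 - (norm (x - y))\<^sup>2 / 4"
    by (simp add: midpoint_def power2_norm_eq_inner inner_add_left inner_add_right inner_diff_left
        inner_diff_right inner_commute[of y x] field_simps)
  ultimately show ?thesis
    by (simp add: field_simps)
qed

lemma strongly_convex_ex1_min:
  fixes f :: "real^'n \<Rightarrow> real"
  assumes "strongly_convex f"
  shows "\<exists>!x. \<forall>y. f x \<le> f y"
proof (rule ex_ex1I)
  show "\<exists>x. \<forall>y. f x \<le> f y"
    using strongly_convex_attains_min[OF assms] by metis
next
  fix x y
  assume x: "\<forall>z. f x \<le> f z" and y: "\<forall>z. f y \<le> f z"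
  obtain \<mu> where "0 < \<mu>" and conv: "convex_on UNIV (\<lambda>x. f x - \<mu> / 2 * (norm x)\<^sup>2)"
    using assms by (auto simp: strongly_convex_def)
  have "f x \<le> f (midpoint x y)" and "f x = f y"
    using x y by (auto intro: order_antisym)
  then have "\<mu> / 8 * (norm (x - y))\<^sup>2 \<le> 0"
    using strongly_convex_midpoint_le[OF conv, of x y] by simp
  with \<open>0 < \<mu>\<close> show "x = y"
    by (simp add: mult_le_0_iff)
qed

theorem lemma2:
  fixes M :: "real^'n^'n"
    and \<delta>i \<delta>im1 L :: real
    and \<theta>im1 \<theta>im2 :: "real^'n"
    and u :: 'u
    and Pbar :: "real^'n \<Rightarrow> 'u \<Rightarrow> real"
    and E :: "real^'n \<Rightarrow> real"
  assumes "sym_pos_def M"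
    and "\<delta>i > 0" and "\<delta>im1 > 0"
    and "L > 0"
    and "curvature_bounded L (\<lambda>\<theta>. Pbar \<theta> u)"
    and "\<And>\<theta>. E \<theta> = 1 / (2 * \<delta>i\<^sup>2) *
            Mnorm_sq M (\<theta> - (1 + \<delta>i / \<delta>im1) *\<^sub>R \<theta>im1 + (\<delta>i / \<delta>im1) *\<^sub>R \<theta>im2)
            + Pbar \<theta> u"
    and "\<delta>i < sqrt (sigma_min M / L)"
  shows "strongly_convex E \<and> (\<exists>!\<theta>. \<forall>\<theta>'. E \<theta> \<le> E \<theta>')"
proof -
  define s where "s = sigma_min M"
  define a where "a = 1 / (2 * \<delta>i\<^sup>2)"
  define c where "c = (1 + \<delta>i / \<delta>im1) *\<^sub>R \<theta>im1 - (\<delta>i / \<delta>im1) *\<^sub>R \<theta>im2"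
  define \<mu> where "\<mu> = 2 * a * s - L"
  have "sqrt (\<delta>i\<^sup>2) < sqrt (s / L)"
    using assms(2,7) by (simp add: s_def)
  then have "\<delta>i\<^sup>2 < s / L"
    by (simp only: real_sqrt_less_iff)
  then have "0 < \<mu>"
    using assms(2,4) by (simp add: \<mu>_def a_def field_simps)
  have shift: "\<theta> - (1 + \<delta>i / \<delta>im1) *\<^sub>R \<theta>im1 + (\<delta>i / \<delta>im1) *\<^sub>R \<theta>im2 = \<theta> - c" for \<theta>
    by (simp add: c_def algebra_simps)
  have E_eq: "E \<theta> = a * ((\<theta> - c) \<bullet> (M *v (\<theta> - c))) + Pbar \<theta> u" for \<theta>
    using assms(6)[of \<theta>] unfolding shift Mnorm_sq_def a_def .
  have E_split: "E \<theta> - \<mu> / 2 * (norm \<theta>)\<^sup>2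
      = a * ((\<theta> - c) \<bullet> (M *v (\<theta> - c)) - s * (\<theta> \<bullet> \<theta>)) + (Pbar \<theta> u + L / 2 * (norm \<theta>)\<^sup>2)" for \<theta>
    unfolding E_eq \<mu>_def by (simp add: power2_norm_eq_inner field_simps)
  have "convex_on UNIV (\<lambda>\<theta>. a * ((\<theta> - c) \<bullet> (M *v (\<theta> - c)) - s * (\<theta> \<bullet> \<theta>)))"
    using assms(1) sigma_min_le_quadratic_form[OF assms(1)]
    by (intro convex_on_cmul convex_on_shifted_quadratic_form) (auto simp: sym_pos_def_def s_def a_def)
  moreover have "convex_on UNIV (\<lambda>\<theta>. Pbar \<theta> u + L / 2 * (norm \<theta>)\<^sup>2)"
    using assms(5) by (simp add: curvature_bounded_def weakly_convex_def)
  ultimately have "convex_on UNIV (\<lambda>\<theta>. E \<theta> - \<mu> / 2 * (norm \<theta>)\<^sup>2)"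
    unfolding E_split by (rule convex_on_add)
  with \<open>0 < \<mu>\<close> have "strongly_convex E"
    by (auto simp: strongly_convex_def)
  then show ?thesis
    using strongly_convex_ex1_min by blast
qed

end
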